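(* Let $R$ be a Noetherian commutative ring with unit. Then $(\mathrm{Id}^+(R),\tau^{\mathrm{con}},\le)$ and $(\mathrm{Id}(R),\tau^{\mathrm{con}},\le)$ are Noetherian Priestley spaces.
   Context: $\mathrm{Id}^+(R)$ is the set of all ideals of $R$ (including $R$) and $\mathrm{Id}(R)$ the set of proper ideals. Identifying an ideal with its characteristic function, these are closed subsets of $\{0,1\}^R$, and $\tau^{\mathrm{con}}$ is the induced product topology. The order is reverse inclusion: $\mathfrak A\le\mathfrak B$ iff $\mathfrak B\subseteq\mathfrak A$. A Priestley space is a partially ordered set with a quasi-compact topology such that whenever $y\not\le x$ there is a clopen down-set containing $x$ but not $y$; it is Noetherian if every decreasing sequence of closed down-sets is eventually stationary. *)

theory Defs
  imports "HOL-Analysis.Analysis"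
begin

definition is_ideal :: "('a::comm_ring_1) set \<Rightarrow> bool" where
  "is_ideal I \<longleftrightarrow> 0 \<in> I \<and> (\<forall>x\<in>I. \<forall>y\<in>I. x + y \<in> I) \<and> (\<forall>r x. x \<in> I \<longrightarrow> r * x \<in> I)"

definition noetherian_ring :: "('a::comm_ring_1) itself \<Rightarrow> bool" where
  "noetherian_ring _ \<longleftrightarrow>
     (\<forall>I :: nat \<Rightarrow> 'a set. (\<forall>n. is_ideal (I n)) \<and> (\<forall>n. I n \<subseteq> I (Suc n))
        \<longrightarrow> (\<exists>N. \<forall>n\<ge>N. I n = I N))"

text \<open>An ideal is identified with its characteristic function in {0,1}^R = 'a \<Rightarrow> bool.\<close>
definition Id_plus :: "('a::comm_ring_1 \<Rightarrow> bool) set" where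
  "Id_plus = {P. is_ideal (Collect P)}"

definition Id_proper :: "('a::comm_ring_1 \<Rightarrow> bool) set" where
  "Id_proper = {P. is_ideal (Collect P) \<and> Collect P \<noteq> UNIV}"

definition cantor_top :: "('a \<Rightarrow> bool) topology" where
  "cantor_top = product_topology (\<lambda>_. discrete_topology (UNIV :: bool set)) UNIV"

definition tau_con :: "('a::comm_ring_1 \<Rightarrow> bool) set \<Rightarrow> ('a \<Rightarrow> bool) topology" where
  "tau_con S = subtopology cantor_top S"

definition rev_incl :: "('a \<Rightarrow> bool) \<Rightarrow> ('a \<Rightarrow> bool) \<Rightarrow> bool" where
  "rev_incl A B \<longleftrightarrow> Collect B \<subseteq> Collect A"

definition down_set_in :: "'b set \<Rightarrow> ('b \<Rightarrow> 'b \<Rightarrow> bool) \<Rightarrow> 'b set \<Rightarrow> bool" where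
  "down_set_in S le U \<longleftrightarrow> U \<subseteq> S \<and> (\<forall>u\<in>U. \<forall>v\<in>S. le v u \<longrightarrow> v \<in> U)"

definition partial_order_in :: "'b set \<Rightarrow> ('b \<Rightarrow> 'b \<Rightarrow> bool) \<Rightarrow> bool" where
  "partial_order_in S le \<longleftrightarrow>
     (\<forall>x\<in>S. le x x) \<and>
     (\<forall>x\<in>S. \<forall>y\<in>S. le x y \<and> le y x \<longrightarrow> x = y) \<and>
     (\<forall>x\<in>S. \<forall>y\<in>S. \<forall>z\<in>S. le x y \<and> le y z \<longrightarrow> le x z)"

definition priestley_space :: "'b topology \<Rightarrow> ('b \<Rightarrow> 'b \<Rightarrow> bool) \<Rightarrow> bool" where
  "priestley_space X le \<longleftrightarrow>
     partial_order_in (topspace X) le \<and> compact_space X \<and>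
     (\<forall>x\<in>topspace X. \<forall>y\<in>topspace X. \<not> le y x \<longrightarrow>
        (\<exists>U. openin X U \<and> closedin X U \<and> down_set_in (topspace X) le U \<and> x \<in> U \<and> y \<notin> U))"

definition noetherian_priestley_space :: "'b topology \<Rightarrow> ('b \<Rightarrow> 'b \<Rightarrow> bool) \<Rightarrow> bool" where
  "noetherian_priestley_space X le \<longleftrightarrow> priestley_space X le \<and>
     (\<forall>C :: nat \<Rightarrow> 'b set. (\<forall>n. closedin X (C n) \<and> down_set_in (topspace X) le (C n))
        \<and> (\<forall>n. C (Suc n) \<subseteq> C n) \<longrightarrow> (\<exists>N. \<forall>n\<ge>N. C n = C N))"

end

theory Submission
  imports Defs
begin

text \<open>The sets \<open>{I. a \<in> I}\<close> are clopen down-sets of the Cantor cube, so they separate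
  ideals in the Priestley sense, and the ideals form a closed, hence compact, subspace.
  In a Noetherian ring every ideal \<open>I\<close> is generated by a finite \<open>F\<close>, and the basic open
  set \<open>{J. F \<subseteq> J}\<close> around \<open>I\<close> lies below \<open>I\<close>; hence every down-set of ideals is open.
  A decreasing sequence of closed sets in a compact space whose intersection is open
  is eventually stationary.\<close>

lemma topspace_cantor_top [simp]: "topspace cantor_top = UNIV"
  by (simp add: cantor_top_def)

lemma compact_space_cantor_top: "compact_space cantor_top"
  unfolding cantor_top_def
  by (simp add: compact_space_product_topology compact_space_discrete_topology)

lemma openin_cantor_top_coordinate: "openin cantor_top {P. P a}"
proof -
  have "openin cantor_top {P \<in> topspace cantor_top. P a \<in> {True}}"
    unfolding cantor_top_def
    by (rule openin_continuous_map_preimage[OF continuous_map_product_projection]) auto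
  then show ?thesis by simp
qed

lemma closedin_cantor_top_coordinate: "closedin cantor_top {P. P a}"
proof -
  have "closedin cantor_top {P \<in> topspace cantor_top. P a \<in> {True}}"
    unfolding cantor_top_def
    by (rule closedin_continuous_map_preimage[OF continuous_map_product_projection]) auto
  then show ?thesis by simp
qed

lemma closedin_cantor_top_not_coordinate: "closedin cantor_top {P. \<not> P a}"
proof -
  have "closedin cantor_top (topspace cantor_top - {P. P a})"
    by (rule closedin_diff[OF closedin_topspace openin_cantor_top_coordinate])
  moreover have "topspace cantor_top - {P. P a} = {P. \<not> P a}" by auto
  ultimately show ?thesis by simp
qed

lemma closedin_Id_plus: "closedin cantor_top Id_plus"
proof -
  have closed_implication: "closedin cantor_top {P. P x \<longrightarrow> P z}" for x z
  proof -
    have "{P. P x \<longrightarrow> P z} = {P. \<not> P x} \<union> {P. P z}" by auto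
    then show ?thesis
      by (simp add: closedin_Un closedin_cantor_top_coordinate closedin_cantor_top_not_coordinate)
  qed
  have closed_double_implication: "closedin cantor_top {P. P x \<longrightarrow> P y \<longrightarrow> P z}" for x y z
  proof -
    have "{P. P x \<longrightarrow> P y \<longrightarrow> P z} = {P. \<not> P x} \<union> {P. P y \<longrightarrow> P z}" by auto
    then show ?thesis by (simp add: closedin_Un closedin_cantor_top_not_coordinate closed_implication)
  qed
  have Id_plus_eq: "Id_plus = {P. P 0}
     \<inter> (\<Inter>x. \<Inter>y. {P. P x \<longrightarrow> P y \<longrightarrow> P (x + y)})
     \<inter> (\<Inter>r. \<Inter>x. {P. P x \<longrightarrow> P (r * x)})"
    by (auto simp: Id_plus_def is_ideal_def)
  show ?thesis
    unfolding Id_plus_eq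
    by (simp add: closedin_Int closedin_INT closed_implication closed_double_implication
        closedin_cantor_top_coordinate)
qed

lemma is_ideal_proper_iff:
  assumes "is_ideal I"
  shows "I \<noteq> UNIV \<longleftrightarrow> 1 \<notin> I"
proof -
  have "r \<in> I" if "1 \<in> I" for r
    using assms that mult.right_neutral[of r] unfolding is_ideal_def by metis
  then show ?thesis by auto
qed

lemma Id_proper_eq: "Id_proper = Id_plus \<inter> {P. \<not> P 1}"
  unfolding Id_proper_def Id_plus_def using is_ideal_proper_iff by blast

lemma closedin_Id_proper: "closedin cantor_top Id_proper"
  unfolding Id_proper_eq by (intro closedin_Int closedin_Id_plus closedin_cantor_top_not_coordinate)

lemma is_ideal_hull: "is_ideal (is_ideal hull F)"
  unfolding hull_def is_ideal_def by auto

lemma noetherian_ringD: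
  assumes "noetherian_ring TYPE('a::comm_ring_1)"
    and "\<And>n. is_ideal (I n :: 'a set)" and "\<And>n. I n \<subseteq> I (Suc n)"
  shows "\<exists>N. \<forall>n\<ge>N. I n = I N"
  using assms unfolding noetherian_ring_def by (elim allE[of _ I]) simp

lemma noetherian_ring_finitely_generated:
  assumes noeth: "noetherian_ring TYPE('a::comm_ring_1)" and I: "is_ideal (I :: 'a set)"
  obtains F where "finite F" "F \<subseteq> I" "is_ideal hull F = I"
proof -
  have "\<exists>F. finite F \<and> F \<subseteq> I \<and> is_ideal hull F = I"
  proof (rule ccontr)
    assume not_fg: "\<not> ?thesis"
    have extend: "\<exists>G. (finite G \<and> G \<subseteq> I) \<and> F \<subseteq> G \<and> \<not> G \<subseteq> is_ideal hull F"
      if "finite F \<and> F \<subseteq> I" for F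
    proof -
      have "\<not> I \<subseteq> is_ideal hull F"
      proof
        assume "I \<subseteq> is_ideal hull F"
        moreover have "is_ideal hull F \<subseteq> I" using that I by (simp add: hull_minimal)
        ultimately have "is_ideal hull F = I" by (rule subset_antisym[symmetric])
        then show False using not_fg that by blast
      qed
      then obtain a where "a \<in> I" "a \<notin> is_ideal hull F" by blast
      then show ?thesis using that by (intro exI[of _ "insert a F"]) auto
    qed
    have "\<exists>A. \<forall>n. (finite (A n) \<and> A n \<subseteq> I)
        \<and> A n \<subseteq> A (Suc n) \<and> \<not> A (Suc n) \<subseteq> is_ideal hull A n"
    proof (rule dependent_nat_choice)
      show "\<exists>F. finite F \<and> F \<subseteq> I" by (intro exI[of _ "{}"]) simp
    qed (fact extend)
    then obtain A where "\<forall>n. (finite (A n) \<and> A n \<subseteq> I)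
        \<and> A n \<subseteq> A (Suc n) \<and> \<not> A (Suc n) \<subseteq> is_ideal hull A n"
      by blast
    then have grow: "A n \<subseteq> A (Suc n)" "\<not> A (Suc n) \<subseteq> is_ideal hull A n" for n
      by simp_all
    have "\<exists>N. \<forall>n\<ge>N. is_ideal hull A n = is_ideal hull A N"
      using noetherian_ringD[OF noeth, of "\<lambda>n. is_ideal hull A n"]
      by (simp add: is_ideal_hull grow hull_mono)
    then obtain N where N: "\<And>n. n \<ge> N \<Longrightarrow> is_ideal hull A n = is_ideal hull A N" by auto
    have "A (Suc N) \<subseteq> is_ideal hull A N"
      using hull_subset[of "A (Suc N)" is_ideal] N[of "Suc N"] by simp
    with grow(2) show False by contradiction
  qed
  then show thesis using that by metis
qed

lemma down_set_in_subset: "down_set_in S le D \<Longrightarrow> D \<subseteq> S"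
  by (simp add: down_set_in_def)

lemma down_set_inD:
  "down_set_in S le D \<Longrightarrow> u \<in> D \<Longrightarrow> v \<in> S \<Longrightarrow> le v u \<Longrightarrow> v \<in> D"
  by (simp add: down_set_in_def)

lemma openin_tau_con_down_set:
  assumes noeth: "noetherian_ring TYPE('a::comm_ring_1)"
    and S: "S \<subseteq> (Id_plus :: ('a \<Rightarrow> bool) set)" and D: "down_set_in S rev_incl D"
  shows "openin (tau_con S) D"
  unfolding openin_subopen[of _ D]
proof
  fix u assume "u \<in> D"
  with down_set_in_subset[OF D] have "u \<in> S" by (rule subsetD)
  then have "is_ideal (Collect u)" using S by (auto simp: Id_plus_def)
  then obtain F where F: "finite F" "F \<subseteq> Collect u" "is_ideal hull F = Collect u"
    by (rule noetherian_ring_finitely_generated[OF noeth])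
  define V where "V = S \<inter> (\<Inter>a\<in>F. {P. P a})"
  have "openin cantor_top (\<Inter>a\<in>F. {P. P a})"
    using openin_INT[OF F(1), of cantor_top "\<lambda>a. {P. P a}"]
    by (simp add: openin_cantor_top_coordinate)
  then have "openin (tau_con S) V"
    unfolding V_def tau_con_def by (rule openin_subtopology_Int2)
  moreover have "u \<in> V" using \<open>u \<in> S\<close> F(2) unfolding V_def by auto
  moreover have "V \<subseteq> D"
  proof
    fix P assume "P \<in> V"
    then have "P \<in> S" "is_ideal (Collect P)" "F \<subseteq> Collect P"
      using S unfolding V_def Id_plus_def by auto
    then have "is_ideal hull F \<subseteq> Collect P" by (simp add: hull_minimal)
    with F(3) have "rev_incl P u" by (simp add: rev_incl_def)
    then show "P \<in> D" by (rule down_set_inD[OF D \<open>u \<in> D\<close> \<open>P \<in> S\<close>])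
  qed
  ultimately show "\<exists>T. openin (tau_con S) T \<and> u \<in> T \<and> T \<subseteq> D" by blast
qed

lemma compact_space_decseq_closedin_stationary:
  fixes C :: "nat \<Rightarrow> 'a set"
  assumes compact: "compact_space X" and closed: "\<And>n. closedin X (C n)" and dec: "decseq C"
    and open_Inter: "openin X (\<Inter>n. C n)"
  shows "\<exists>N. \<forall>n\<ge>N. C n = C N"
proof -
  define K where "K = (\<Inter>n. C n)"
  have "\<exists>N. C N - K = {}"
  proof (rule ccontr)
    assume "\<nexists>N. C N - K = {}"
    moreover have "closedin X (C n - K)" for n
      using closed open_Inter by (simp add: K_def closedin_diff)
    moreover have "decseq (\<lambda>n. C n - K)" using dec by (auto simp: decseq_def)
    ultimately have "(\<Inter>n. C n - K) \<noteq> {}"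
      using compact_space_imp_nest[OF compact] by metis
    then show False unfolding K_def by blast
  qed
  then obtain N where "C N \<subseteq> K" by (meson Diff_eq_empty_iff)
  then show ?thesis using dec unfolding K_def decseq_def by blast
qed

lemma priestley_space_tau_con:
  assumes "closedin cantor_top S"
  shows "priestley_space (tau_con S) rev_incl"
proof -
  have "\<exists>U. openin (tau_con S) U \<and> closedin (tau_con S) U \<and> down_set_in S rev_incl U
      \<and> x \<in> U \<and> y \<notin> U"
    if "x \<in> S" "\<not> rev_incl y x" for x y
  proof -
    obtain a where "x a" "\<not> y a" using \<open>\<not> rev_incl y x\<close> unfolding rev_incl_def by auto
    moreover have "openin (tau_con S) (S \<inter> {P. P a})" "closedin (tau_con S) (S \<inter> {P. P a})"
      unfolding tau_con_def
      by (simp_all add: openin_subtopology_Int2 closedin_subtopology_Int_closed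
          openin_cantor_top_coordinate closedin_cantor_top_coordinate)
    moreover have "down_set_in S rev_incl (S \<inter> {P. P a})"
      unfolding down_set_in_def rev_incl_def by blast
    ultimately show ?thesis using \<open>x \<in> S\<close> by blast
  qed
  moreover have "compact_space (tau_con S)"
    unfolding tau_con_def
    by (intro compact_space_subtopology closedin_compact_space compact_space_cantor_top assms)
  moreover have "partial_order_in S rev_incl"
    unfolding partial_order_in_def rev_incl_def by auto
  ultimately show ?thesis unfolding priestley_space_def by (simp add: tau_con_def)
qed

lemma noetherian_priestley_space_tau_con:
  assumes noeth: "noetherian_ring TYPE('a::comm_ring_1)"
    and S: "S \<subseteq> (Id_plus :: ('a \<Rightarrow> bool) set)" and closed: "closedin cantor_top S"
  shows "noetherian_priestley_space (tau_con S) rev_incl"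
proof -
  have "\<exists>N. \<forall>n\<ge>N. C n = C N"
    if C: "\<forall>n. closedin (tau_con S) (C n) \<and> down_set_in S rev_incl (C n)"
      and dec: "\<forall>n. C (Suc n) \<subseteq> C n"
    for C :: "nat \<Rightarrow> ('a \<Rightarrow> bool) set"
  proof (rule compact_space_decseq_closedin_stationary)
    show "compact_space (tau_con S)"
      using priestley_space_tau_con[OF closed] by (simp add: priestley_space_def)
    show "closedin (tau_con S) (C n)" for n using C by simp
    show "decseq C" using dec by (simp add: decseq_SucI)
    have "down_set_in S rev_incl (\<Inter>n. C n)" using C unfolding down_set_in_def by blast
    then show "openin (tau_con S) (\<Inter>n. C n)" by (rule openin_tau_con_down_set[OF noeth S])
  qed
  then show ?thesis
    using priestley_space_tau_con[OF closed]
    unfolding noetherian_priestley_space_def by (simp add: tau_con_def)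
qed

theorem lemma3p18:
  assumes "noetherian_ring TYPE('a::comm_ring_1)"
  shows "noetherian_priestley_space (tau_con (Id_plus :: ('a \<Rightarrow> bool) set)) rev_incl
       \<and> noetherian_priestley_space (tau_con (Id_proper :: ('a \<Rightarrow> bool) set)) rev_incl"
proof -
  have "(Id_proper :: ('a \<Rightarrow> bool) set) \<subseteq> Id_plus" by (simp add: Id_proper_eq)
  then show ?thesis
    using noetherian_priestley_space_tau_con[OF assms order_refl closedin_Id_plus]
      noetherian_priestley_space_tau_con[OF assms _ closedin_Id_proper]
    by blast
qed

end
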